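(* Let $b\in\mathbb{N}$ and $0\le a\le b-1$ be integers, and let $m,n\ge 2$ be the minimal integers with $ma\equiv a \pmod b$ and $a^{n}\equiv a\pmod b$ (assumed to exist). Consider the polyadic ring $\mathbb{Z}^{[a,b]}_{(m,n)}$. If $\mathbb{Z}^{[a,b]}_{(m,n)}$ contains a polyadic prime number, then either $a=1$ and $(m,n)=(b+1,2)$, i.e. the ring is $\mathbb{Z}^{[1,b]}_{(b+1,2)}$, or $a=b-1$ and $(m,n)=(b+1,3)$, i.e. the ring is $\mathbb{Z}^{[b-1,b]}_{(b+1,3)}$.
   Context: The ring of polyadic integer numbers $\mathbb{Z}^{[a,b]}_{(m,n)}$ is the congruence class $[[a]]_b=\{a+bk : k\in\mathbb{Z}\}$ equipped with the $m$-ary addition $\nu_m[x_1,\dots,x_m]=x_1+\dots+x_m$ and the $n$-ary multiplication $\mu_n[x_1,\dots,x_n]=x_1x_2\cdots x_n$ (ordinary integer sum and product); the choice of $m,n$ guarantees these operations are closed in $[[a]]_b$. For $\ell\in\mathbb{N}$, $\mu_n^{(\ell)}$ denotes the $\ell$-fold iterated composition of $\mu_n$, which takes $\ell(n-1)+1$ arguments. A unit of the ring is an element $e$ with $\mu_n[e,\dots,e,x]=x$ ($n-1$ copies of $e$) for all $x$ in the ring. A polyadic prime number is an element $x$ of the ring such that the ring has a unit $e$ and the only expansion of $x$ as a polyadic product $x=\mu_n^{(\ell)}[x_{1},\dots,x_{\ell(n-1)+1}]$ of elements of the ring is the trivial one $x=\mu_n^{(\ell)}[x,e,\dots,e]$ (with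 $\ell(n-1)$ copies of $e$). *)

theory Defs
  imports "HOL-Number_Theory.Cong" "HOL-Library.Multiset"
begin

definition pcarrier :: "int \<Rightarrow> int \<Rightarrow> int set" where
  "pcarrier a b = {x. \<exists>k::int. x = a + b * k}"

definition pmul :: "int list \<Rightarrow> int" where
  "pmul xs = prod_list xs"

definition punit :: "int \<Rightarrow> int \<Rightarrow> nat \<Rightarrow> int \<Rightarrow> bool" where
  "punit a b n e \<longleftrightarrow> e \<in> pcarrier a b \<and>
     (\<forall>x \<in> pcarrier a b. pmul (replicate (n - 1) e @ [x]) = x)"

text \<open>Expansion of x as an l-fold iterated product mu_n^(l) of l(n-1)+1 ring elements.
  The iterated composition of mu_n equals the product of all its arguments.\<close>
definition pexpansion :: "int \<Rightarrow> int \<Rightarrow> nat \<Rightarrow> int \<Rightarrow> nat \<Rightarrow> int list \<Rightarrow> bool" where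
  "pexpansion a b n x l xs \<longleftrightarrow> length xs = l * (n - 1) + 1 \<and>
     set xs \<subseteq> pcarrier a b \<and> pmul xs = x"

definition polyadic_prime :: "int \<Rightarrow> int \<Rightarrow> nat \<Rightarrow> nat \<Rightarrow> int \<Rightarrow> bool" where
  "polyadic_prime a b m n x \<longleftrightarrow> x \<in> pcarrier a b \<and> (\<exists>e. punit a b n e) \<and>
     (\<forall>l xs. pexpansion a b n x l xs \<longrightarrow>
        (\<exists>e. punit a b n e \<and> mset xs = mset (x # replicate (l * (n - 1)) e)))"

end

theory Submission
  imports Defs
begin

text \<open>A unit e fixes the nonzero element a + b, so e^(n-1) = 1 and e = \<plusminus>1. As the residue of
  every element of [[a]]_b is a, this forces a = 1 (e = 1) or a = b - 1 (e = -1, n odd), and the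
  minimality of m and n then pins down the arities. For b = 1 the ring is the binary ring \<int>,
  where x = x \<cdot> (-1) \<cdot> (-1) is a nontrivial expansion of every x.\<close>

lemma pcarrier_mod: "x \<in> pcarrier a b \<Longrightarrow> x mod b = a mod b"
  unfolding pcarrier_def by auto

lemma punit_power_eq_1:
  assumes "punit a b n e" "x \<in> pcarrier a b" "x \<noteq> 0"
  shows "e ^ (n - 1) = 1"
proof -
  have "e ^ (n - 1) * x = x"
    using assms(1,2) unfolding punit_def pmul_def by auto
  with \<open>x \<noteq> 0\<close> show ?thesis by simp
qed

lemma int_power_eq_1_cases:
  fixes e :: int
  assumes "e ^ k = 1" "k \<noteq> 0"
  shows "e = 1 \<or> (e = -1 \<and> even k)"
proof -
  have "e dvd 1"
    using assms by (metis dvd_power dvd_refl neq0_conv)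
  then have "e = 1 \<or> e = -1"
    by (auto simp: zdvd1_eq abs_if split: if_splits)
  with assms(1) show ?thesis
    by (auto simp: minus_one_power_iff split: if_splits)
qed

lemma not_polyadic_prime_binary:
  assumes "-1 \<in> pcarrier a b"
  shows "\<not> polyadic_prime a b m 2 x"
proof
  assume prime: "polyadic_prime a b m 2 x"
  then have "pexpansion a b 2 x 2 [x, -1, -1]"
    using assms unfolding polyadic_prime_def pexpansion_def pmul_def by simp
  then obtain e where unit: "punit a b 2 e" and triv: "mset [x, -1, -1] = mset [x, e, e]"
    using prime unfolding polyadic_prime_def by (fastforce simp: numeral_2_eq_2)
  have "e = 1"
    using punit_power_eq_1[OF unit assms] by simp
  then have "count (mset [x, -1, -1]) (-1) \<noteq> count (mset [x, e, e]) (-1)"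
    by auto
  with triv show False by simp
qed

lemma le_of_minimal:
  fixes P :: "nat \<Rightarrow> bool"
  assumes "\<forall>k. 2 \<le> k \<and> k < n \<longrightarrow> \<not> P k" "P j" "2 \<le> j"
  shows "n \<le> j"
  using assms by (meson not_le)

lemma minimal_additive_arity:
  fixes a b :: int and m :: nat
  assumes "b \<ge> 1" "coprime a b" "m \<ge> 2" "[int m * a = a] (mod b)"
    and minimal: "\<forall>k::nat. 2 \<le> k \<and> k < m \<longrightarrow> \<not> [int k * a = a] (mod b)"
  shows "int m = b + 1"
proof -
  have "b dvd (int m - 1) * a"
    using assms(4) by (simp add: cong_iff_dvd_diff algebra_simps)
  then have "b dvd int m - 1"
    using assms(2) by (simp add: coprime_commute coprime_dvd_mult_left_iff)
  then have lower: "b \<le> int m - 1"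
    using assms(3) by (intro zdvd_imp_le) auto
  have "[int (nat (b + 1)) * a = a] (mod b)"
    using assms(1) by (simp add: cong_iff_dvd_diff algebra_simps)
  then have "m \<le> nat (b + 1)"
    using assms(1) by (intro le_of_minimal[OF minimal]) auto
  with lower assms(1) show ?thesis by (simp add: le_nat_iff)
qed

lemma cong_cube_of_cong_minus_one:
  fixes a b :: int
  assumes "[a = -1] (mod b)"
  shows "[a ^ 3 = a] (mod b)"
proof -
  have "[a ^ 3 = (-1) ^ 3] (mod b)"
    using assms by (rule cong_pow)
  then have "[a ^ 3 = -1] (mod b)"
    by simp
  then show ?thesis
    using assms by (rule cong_trans[OF _ cong_sym])
qed

theorem mainTheorem1:
  fixes a b :: int and m n :: nat
  assumes "b \<ge> 1" and "0 \<le> a" and "a \<le> b - 1"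
    and "m \<ge> 2" and "[int m * a = a] (mod b)"
    and "\<forall>k::nat. 2 \<le> k \<and> k < m \<longrightarrow> \<not> [int k * a = a] (mod b)"
    and "n \<ge> 2" and "[a ^ n = a] (mod b)"
    and "\<forall>k::nat. 2 \<le> k \<and> k < n \<longrightarrow> \<not> [a ^ k = a] (mod b)"
    and "\<exists>x. polyadic_prime a b m n x"
  shows "(a = 1 \<and> int m = b + 1 \<and> n = 2) \<or> (a = b - 1 \<and> int m = b + 1 \<and> n = 3)"
proof -
  obtain x e where prime: "polyadic_prime a b m n x" and unit: "punit a b n e"
    using assms(10) unfolding polyadic_prime_def by blast
  have "a + b \<in> pcarrier a b" "a + b \<noteq> 0"
    using assms(2,3) unfolding pcarrier_def by (auto intro: exI[of _ 1])
  then have "e = 1 \<or> (e = -1 \<and> even (n - 1))"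
    using assms(7) by (intro int_power_eq_1_cases punit_power_eq_1[OF unit]) auto
  moreover have "e mod b = a"
    using unit assms(2,3) unfolding punit_def by (auto dest: pcarrier_mod)
  moreover have "b \<ge> 2"
  proof (rule ccontr)
    assume "\<not> b \<ge> 2"
    then have "b = 1" using assms(1) by simp
    then have "n \<le> 2" "-1 \<in> pcarrier a b"
      using le_of_minimal[OF assms(9)] unfolding pcarrier_def by (auto intro: exI[of _ "-1 - a"])
    then show False
      using prime assms(7) not_polyadic_prime_binary by (metis le_antisym)
  qed
  ultimately consider "a = 1" | "a = b - 1" "odd n"
    using assms(7) by (force simp: zmod_minus1)
  then show ?thesis
  proof cases
    case 1
    then have "n \<le> 2"
      by (intro le_of_minimal[OF assms(9)]) auto
    moreover have "int m = b + 1"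
      using 1 by (intro minimal_additive_arity[OF assms(1) _ assms(4-6)]) simp
    ultimately show ?thesis using 1 assms(7) by simp
  next
    case 2
    then have "[a = -1] (mod b)"
      by (simp add: cong_iff_dvd_diff)
    then have "n \<le> 3"
      by (intro le_of_minimal[OF assms(9)] cong_cube_of_cong_minus_one) auto
    moreover have "int m = b + 1"
      using 2 by (intro minimal_additive_arity[OF assms(1) _ assms(4-6)]) simp
    ultimately show ?thesis using 2 assms(7) by (auto elim: oddE)
  qed
qed

end
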